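(* For every $f(y,t,x)\in\mathbb{C}[[y,t,x]]$, either $\mathfrak{c}(\operatorname{Conv}_\varphi(f))=0$ or $\operatorname{Conv}_\varphi(f)=\mathbb{C}$.
   Context: Let $x=(x_1,\dots,x_n)$. A formal power series is convergent if its coefficients satisfy $|a_\alpha|\le C^{|\alpha|}$ for some $C$ and all $\alpha\ne0$. Fix a convergent power series $\varphi(t,x)=\sum_{j\ge1}b_j(x)t^j$ with convergent $b_j(x)\in\mathbb{C}[[x]]$ and $b_1(0)=1$. For $s\in\mathbb{C}$ put $\varphi(s,t,x)=s\,b_1(x)t+\sum_{j\ge2}b_j(x)t^j$. For $f\in\mathbb{C}[[y,t,x]]$, $\operatorname{Conv}_\varphi(f)=\{s\in\mathbb{C}: f(\varphi(s,t,x),t,x)\text{ converges as a power series in }(t,x)\}$. $\mathfrak{c}$ denotes logarithmic capacity; for an $F_\sigma$ set $E$, $\mathfrak{c}(E)=0$ means $\mathfrak{c}(E\cap\{|z|\le r\})=0$ for all $r\ge0$. *)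

theory Defs
  imports "HOL-Probability.Probability"
begin

text \<open>The variables x = (x_1..x_n) are indexed by a finite type 'n; a multi-index is
  a function 'n => nat.  A series in (t,x) is given by its coefficient function
  a m alpha = coefficient of t^m x^alpha.  A series in (y,t,x) is given by
  f k m alpha = coefficient of y^k t^m x^alpha.\<close>

type_synonym 'n tx_series = "nat \<Rightarrow> ('n \<Rightarrow> nat) \<Rightarrow> complex"
type_synonym 'n ytx_series = "nat \<Rightarrow> nat \<Rightarrow> ('n \<Rightarrow> nat) \<Rightarrow> complex"
type_synonym 'n x_series = "('n \<Rightarrow> nat) \<Rightarrow> complex"

definition mi_size :: "('n::finite \<Rightarrow> nat) \<Rightarrow> nat" where
  "mi_size \<alpha> = (\<Sum>i\<in>UNIV. \<alpha> i)"

definition x_convergent :: "('n::finite) x_series \<Rightarrow> bool" where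
  "x_convergent a \<longleftrightarrow> (\<exists>C::real. \<forall>\<alpha>. \<alpha> \<noteq> (\<lambda>_. 0) \<longrightarrow> cmod (a \<alpha>) \<le> C ^ mi_size \<alpha>)"

definition tx_convergent :: "('n::finite) tx_series \<Rightarrow> bool" where
  "tx_convergent a \<longleftrightarrow> (\<exists>C::real. \<forall>m \<alpha>. (m, \<alpha>) \<noteq> (0, (\<lambda>_. 0)) \<longrightarrow>
      cmod (a m \<alpha>) \<le> C ^ (m + mi_size \<alpha>))"

definition tx_mult :: "('n::finite) tx_series \<Rightarrow> 'n tx_series \<Rightarrow> 'n tx_series" where
  "tx_mult p q = (\<lambda>m \<alpha>. \<Sum>i\<le>m. \<Sum>\<beta>\<in>{\<beta>. \<forall>j. \<beta> j \<le> \<alpha> j}.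
       p i \<beta> * q (m - i) (\<lambda>j. \<alpha> j - \<beta> j))"

definition tx_one :: "('n::finite) tx_series" where
  "tx_one = (\<lambda>m \<alpha>. if m = 0 \<and> \<alpha> = (\<lambda>_. 0) then 1 else 0)"

primrec tx_pow :: "('n::finite) tx_series \<Rightarrow> nat \<Rightarrow> 'n tx_series" where
  "tx_pow p 0 = tx_one"
| "tx_pow p (Suc k) = tx_mult p (tx_pow p k)"

text \<open>Substitution y := g into f(y,t,x), for g with no t-free terms (g 0 _ = 0), so
  that g^k has t-order >= k and only k <= m contributes to the t^m coefficient.\<close>
definition subst_y :: "('n::finite) ytx_series \<Rightarrow> 'n tx_series \<Rightarrow> 'n tx_series" where
  "subst_y f g = (\<lambda>m \<alpha>. \<Sum>k\<le>m. tx_mult (f k) (tx_pow g k) m \<alpha>)"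

definition phi_s :: "(nat \<Rightarrow> ('n::finite) x_series) \<Rightarrow> complex \<Rightarrow> 'n tx_series" where
  "phi_s b s = (\<lambda>m \<alpha>. if m = 0 then 0 else if m = 1 then s * b 1 \<alpha> else b m \<alpha>)"

definition phi_series :: "(nat \<Rightarrow> ('n::finite) x_series) \<Rightarrow> 'n tx_series" where
  "phi_series b = (\<lambda>m \<alpha>. if m = 0 then 0 else b m \<alpha>)"

definition Conv_phi :: "(nat \<Rightarrow> ('n::finite) x_series) \<Rightarrow> 'n ytx_series \<Rightarrow> complex set" where
  "Conv_phi b f = {s. tx_convergent (subst_y f (phi_s b s))}"

section \<open>Logarithmic capacity (Ransford, Def. 5.1.1)\<close>

text \<open>Logarithmic energy I(mu) = int int log(1/|z-w|) dmu(z) dmu(w), written as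
  (positive part) - (negative part); for compactly supported mu the negative part is finite.\<close>
definition log_energy :: "complex measure \<Rightarrow> ereal" where
  "log_energy \<mu> =
     enn2ereal (\<integral>\<^sup>+ z. \<integral>\<^sup>+ w. (if z = w then \<infinity> else ennreal (- ln (cmod (z - w)))) \<partial>\<mu> \<partial>\<mu>)
   - enn2ereal (\<integral>\<^sup>+ z. \<integral>\<^sup>+ w. (if z = w then 0 else ennreal (ln (cmod (z - w)))) \<partial>\<mu> \<partial>\<mu>)"

definition exp_neg_ereal :: "ereal \<Rightarrow> ereal" where
  "exp_neg_ereal I = (if I = \<infinity> then 0 else if I = - \<infinity> then \<infinity> else ereal (exp (- real_of_ereal I)))"

definition log_capacity :: "complex set \<Rightarrow> ereal" where
  "log_capacity E = Sup (insert 0 {exp_neg_ereal (log_energy \<mu>) | \<mu>.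
      sets \<mu> = sets borel \<and> prob_space \<mu> \<and>
      (\<exists>K. compact K \<and> K \<subseteq> E \<and> emeasure \<mu> K = 1)})"

end

theory Submission
  imports Defs "HOL-Computational_Algebra.Fundamental_Theorem_Algebra"
begin

(* Proof idea (a Bernstein-Walsh argument).  Write F s = f(phi(s,t,x),t,x).  Each coefficient
   s |-> F s m alpha is a polynomial of degree at most m in s, so Conv_phi b f is the countable
   union of the closed sets E C = {s. |F s m alpha| <= C^(m+|alpha|)}.  If Conv_phi b f has
   positive capacity, some probability measure mu of finite logarithmic energy lives on a compact
   subset of it; by countable additivity mu charges one E C on a set where its logarithmic
   potential is bounded, and normalising mu there gives a probability measure nu supported on
   E C whose potential is bounded everywhere.  For such a nu the Bernstein-Walsh inequality
   |p(z0)| <= M e^(c deg p) holds for polynomials with |p| <= M nu-a.e., which turns the bounds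
   on E C into geometric bounds for the coefficients of F z0 at every point z0. *)

section \<open>The coefficients of f(phi(s,t,x),t,x) are polynomials in s\<close>

definition poly_fun_le :: "nat \<Rightarrow> (complex \<Rightarrow> complex) \<Rightarrow> bool" where
  "poly_fun_le d F \<longleftrightarrow> (\<exists>p. degree p \<le> d \<and> F = poly p)"

lemma poly_fun_le_const: "poly_fun_le d (\<lambda>s. c)"
  unfolding poly_fun_le_def by (rule exI[of _ "[:c:]"]) auto

lemma poly_fun_le_linear: "poly_fun_le 1 (\<lambda>s. s * c)"
  unfolding poly_fun_le_def by (rule exI[of _ "[:0, c:]"]) (auto simp: fun_eq_iff degree_pCons_le)

lemma poly_fun_le_mono: "poly_fun_le a F \<Longrightarrow> a \<le> b \<Longrightarrow> poly_fun_le b F"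
  unfolding poly_fun_le_def by (auto intro: order_trans)

lemma poly_fun_le_add: "poly_fun_le d F \<Longrightarrow> poly_fun_le d G \<Longrightarrow> poly_fun_le d (\<lambda>s. F s + G s)"
  unfolding poly_fun_le_def
proof (elim exE conjE)
  fix p q assume "degree p \<le> d" "F = poly p" "degree q \<le> d" "G = poly q"
  then show "\<exists>r. degree r \<le> d \<and> (\<lambda>s. F s + G s) = poly r"
    by (intro exI[of _ "p + q"]) (auto simp: degree_add_le)
qed

lemma poly_fun_le_mult:
  "poly_fun_le a F \<Longrightarrow> poly_fun_le b G \<Longrightarrow> poly_fun_le (a + b) (\<lambda>s. F s * G s)"
  unfolding poly_fun_le_def
proof (elim exE conjE)
  fix p q assume "degree p \<le> a" "F = poly p" "degree q \<le> b" "G = poly q"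
  then show "\<exists>r. degree r \<le> a + b \<and> (\<lambda>s. F s * G s) = poly r"
    by (intro exI[of _ "p * q"]) (auto intro: order.trans[OF degree_mult_le])
qed

lemma poly_fun_le_sum:
  "(\<And>i. i \<in> I \<Longrightarrow> poly_fun_le d (F i)) \<Longrightarrow> poly_fun_le d (\<lambda>s. \<Sum>i\<in>I. F i s)"
proof (induction I rule: infinite_finite_induct)
  case (insert x A)
  then show ?case by (simp add: poly_fun_le_add)
qed (simp_all add: poly_fun_le_const)

lemma poly_fun_le_phi_s: "poly_fun_le m (\<lambda>s. phi_s b s m \<alpha>)"
proof (cases "m = 1")
  case True
  then show ?thesis using poly_fun_le_linear[of "b 1 \<alpha>"] by (simp add: phi_s_def)
next
  case False
  then have "(\<lambda>s. phi_s b s m \<alpha>) = (\<lambda>s. if m = 0 then 0 else b m \<alpha>)" by (simp add: phi_s_def)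
  then show ?thesis by (simp add: poly_fun_le_const)
qed

lemma poly_fun_le_pow_phi_s: "poly_fun_le m (\<lambda>s. tx_pow (phi_s b s) k m \<alpha>)"
proof (induction k arbitrary: m \<alpha>)
  case 0
  then show ?case by (simp add: tx_one_def poly_fun_le_const)
next
  case (Suc k)
  show ?case unfolding tx_pow.simps tx_mult_def
  proof (rule poly_fun_le_sum)
    fix i assume "i \<in> {..m}"
    then have "poly_fun_le (i + (m - i)) (\<lambda>s. \<Sum>\<beta>\<in>{\<beta>. \<forall>j. \<beta> j \<le> \<alpha> j}.
        phi_s b s i \<beta> * tx_pow (phi_s b s) k (m - i) (\<lambda>j. \<alpha> j - \<beta> j))"
      by (intro poly_fun_le_sum poly_fun_le_mult poly_fun_le_phi_s Suc.IH)
    then show "poly_fun_le m (\<lambda>s. \<Sum>\<beta>\<in>{\<beta>. \<forall>j. \<beta> j \<le> \<alpha> j}.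
        phi_s b s i \<beta> * tx_pow (phi_s b s) k (m - i) (\<lambda>j. \<alpha> j - \<beta> j))"
      using \<open>i \<in> {..m}\<close> by simp
  qed
qed

lemma poly_fun_le_subst_phi_s: "poly_fun_le m (\<lambda>s. subst_y f (phi_s b s) m \<alpha>)"
  unfolding subst_y_def tx_mult_def
proof (intro poly_fun_le_sum)
  fix k i \<beta> assume "i \<in> {..m}"
  then have "poly_fun_le (0 + (m - i))
      (\<lambda>s. f k i \<beta> * tx_pow (phi_s b s) k (m - i) (\<lambda>j. \<alpha> j - \<beta> j))"
    by (intro poly_fun_le_mult poly_fun_le_const poly_fun_le_pow_phi_s)
  then show "poly_fun_le m (\<lambda>s. f k i \<beta> * tx_pow (phi_s b s) k (m - i) (\<lambda>j. \<alpha> j - \<beta> j))"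
    by (rule poly_fun_le_mono) simp
qed

definition poly_coeff_family :: "(complex \<Rightarrow> ('n::finite) tx_series) \<Rightarrow> bool" where
  "poly_coeff_family F \<longleftrightarrow> (\<forall>m \<alpha>. poly_fun_le m (\<lambda>s. F s m \<alpha>))"

lemma poly_coeff_family_subst_phi_s: "poly_coeff_family (\<lambda>s. subst_y f (phi_s b s))"
  unfolding poly_coeff_family_def using poly_fun_le_subst_phi_s by blast


section \<open>Convergence as a countable union of closed conditions\<close>

definition tx_bounded :: "('n::finite) tx_series \<Rightarrow> real \<Rightarrow> bool" where
  "tx_bounded a C \<longleftrightarrow>
     (\<forall>m \<alpha>. (m, \<alpha>) \<noteq> (0, (\<lambda>_. 0)) \<longrightarrow> cmod (a m \<alpha>) \<le> C ^ (m + mi_size \<alpha>))"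

text \<open>The constant may be taken to be a natural number, so convergence is a countable union.\<close>
lemma tx_convergent_iff_nat_bound: "tx_convergent a \<longleftrightarrow> (\<exists>C::nat. tx_bounded a (real C))"
proof
  assume "tx_convergent a"
  then obtain C0 :: real where C0: "tx_bounded a C0"
    unfolding tx_convergent_def tx_bounded_def by blast
  define C where "C = nat \<lceil>\<bar>C0\<bar>\<rceil>"
  have "cmod (a m \<alpha>) \<le> real C ^ (m + mi_size \<alpha>)" if "(m, \<alpha>) \<noteq> (0, (\<lambda>_. 0))" for m \<alpha>
  proof -
    have "cmod (a m \<alpha>) \<le> C0 ^ (m + mi_size \<alpha>)" using C0 that unfolding tx_bounded_def by blast
    also have "\<dots> \<le> \<bar>C0\<bar> ^ (m + mi_size \<alpha>)" by (metis abs_ge_self power_abs)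
    also have "\<dots> \<le> real C ^ (m + mi_size \<alpha>)" unfolding C_def by (intro power_mono) linarith+
    finally show ?thesis .
  qed
  then show "\<exists>C::nat. tx_bounded a (real C)" unfolding tx_bounded_def by (intro exI[of _ C]) blast
next
  assume "\<exists>C::nat. tx_bounded a (real C)"
  then obtain C :: nat where "tx_bounded a (real C)" ..
  then show "tx_convergent a" unfolding tx_convergent_def tx_bounded_def by (intro exI[of _ "real C"])
qed

lemma closed_tx_bounded:
  assumes "poly_coeff_family F"
  shows "closed {s. tx_bounded (F s) C}"
  unfolding tx_bounded_def
proof (intro closed_Collect_all)
  fix m \<alpha>
  obtain p where p: "(\<lambda>s. F s m \<alpha>) = poly p"
    using assms unfolding poly_coeff_family_def poly_fun_le_def by blast
  have "closed {s. cmod (poly p s) \<le> C ^ (m + mi_size \<alpha>)}"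
    by (intro closed_Collect_le continuous_intros)
  then have "closed {s. cmod (F s m \<alpha>) \<le> C ^ (m + mi_size \<alpha>)}"
    by (simp add: p[unfolded fun_eq_iff, rule_format])
  then show "closed {s. (m, \<alpha>) \<noteq> (0, (\<lambda>_. 0)) \<longrightarrow> cmod (F s m \<alpha>) \<le> C ^ (m + mi_size \<alpha>)}"
    by (cases "(m, \<alpha>) = (0, (\<lambda>_. 0))") simp_all
qed


section \<open>Logarithmic potentials\<close>

text \<open>The logarithmic kernel log(1/|z-w|) with value infinity on the diagonal, and the
  logarithmic potential of a measure; the energy of mu is the mu-integral of its potential.\<close>
definition log_kernel :: "complex \<Rightarrow> complex \<Rightarrow> ennreal" where
  "log_kernel z w = (if z = w then \<infinity> else ennreal (- ln (cmod (z - w))))"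

definition log_potential :: "complex measure \<Rightarrow> complex \<Rightarrow> ennreal" where
  "log_potential \<mu> z = (\<integral>\<^sup>+w. log_kernel z w \<partial>\<mu>)"

lemma borel_measurable_log_kernel: "log_kernel z \<in> borel_measurable borel"
  unfolding log_kernel_def by measurable

lemma borel_measurable_log_kernel_pair:
  "(\<lambda>x. log_kernel (fst x) (snd x)) \<in> borel_measurable (borel \<Otimes>\<^sub>M borel)"
  unfolding log_kernel_def by measurable

lemma borel_measurable_ln_poly: "(\<lambda>w. ln (cmod (poly p w))) \<in> borel_measurable borel"
proof -
  have "poly p \<in> borel_measurable borel"
    by (intro borel_measurable_continuous_onI continuous_on_poly continuous_on_id)
  then show ?thesis by measurable
qed

lemma log_capacity_nonzero_imp_finite_energy:
  assumes "log_capacity E \<noteq> 0"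
  obtains \<mu> K where "sets \<mu> = sets borel" "prob_space \<mu>" "compact K" "K \<subseteq> E"
    "emeasure \<mu> K = 1" "(\<integral>\<^sup>+z. log_potential \<mu> z \<partial>\<mu>) \<noteq> \<infinity>"
proof -
  define X where "X = {exp_neg_ereal (log_energy \<mu>) | \<mu>. sets \<mu> = sets borel \<and> prob_space \<mu> \<and>
      (\<exists>K. compact K \<and> K \<subseteq> E \<and> emeasure \<mu> K = 1)}"
  have "\<exists>x\<in>X. x \<noteq> 0"
  proof (rule ccontr)
    assume "\<not> (\<exists>x\<in>X. x \<noteq> 0)"
    then have "insert 0 X = {0}" by auto
    then have "log_capacity E = 0" unfolding log_capacity_def X_def[symmetric] \<open>insert 0 X = {0}\<close> by simp
    with assms show False by contradiction
  qed
  then obtain \<mu> K where \<mu>: "sets \<mu> = sets borel" "prob_space \<mu>" "compact K" "K \<subseteq> E"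
      "emeasure \<mu> K = 1" and energy: "exp_neg_ereal (log_energy \<mu>) \<noteq> 0"
    unfolding X_def by blast
  have "log_energy \<mu> \<noteq> \<infinity>" using energy by (auto simp: exp_neg_ereal_def)
  then have "(\<integral>\<^sup>+z. log_potential \<mu> z \<partial>\<mu>) \<noteq> \<infinity>"
    unfolding log_energy_def log_potential_def log_kernel_def by auto
  with \<mu> show thesis by (intro that)
qed

section \<open>The Bernstein-Walsh inequality for measures with bounded potential\<close>

context
  fixes \<nu> :: "complex measure" and r B R :: real
  assumes prob: "prob_space \<nu>" and sets_nu: "sets \<nu> = sets borel"
    and supp: "AE w in \<nu>. cmod w \<le> r"
    and pot_bounded: "\<And>z. log_potential \<nu> z \<le> ennreal B"
    and B0: "0 \<le> B" and r0: "0 \<le> r" and R0: "0 \<le> R"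
begin

lemma borel_measurable_nu: "borel_measurable \<nu> = borel_measurable borel"
  by (rule measurable_cong_sets[OF sets_nu refl])

text \<open>A bounded potential forces nu to have no atoms.\<close>
lemma AE_neq: "AE w in \<nu>. w \<noteq> z"
proof -
  interpret prob_space \<nu> by (rule prob)
  have sz: "{z} \<in> sets \<nu>" using sets_nu by simp
  have "(\<integral>\<^sup>+w. \<infinity> * indicator {z} w \<partial>\<nu>) \<le> log_potential \<nu> z"
    unfolding log_potential_def by (rule nn_integral_mono) (auto simp: log_kernel_def indicator_def)
  also have "\<dots> \<le> ennreal B" by (rule pot_bounded)
  finally have "\<infinity> * emeasure \<nu> {z} \<le> ennreal B"
    using nn_integral_cmult_indicator[OF sz, of \<infinity>] by simp
  then have "emeasure \<nu> {z} = 0"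
    by (cases "emeasure \<nu> {z} = 0") (simp_all add: ennreal_top_mult top_unique)
  then have "{z} \<in> null_sets \<nu>" using sz by (auto intro: null_setsI)
  then show ?thesis by (rule AE_I') auto
qed

text \<open>The function w |-> ln|w - z| is nu-integrable: it is bounded above on the support and
  its negative part is dominated by the kernel.\<close>
lemma integrable_ln_dist: "integrable \<nu> (\<lambda>w. ln (cmod (w - z)))"
proof -
  interpret prob_space \<nu> by (rule prob)
  define k where "k = ln (r + cmod z + 1)"
  have mf: "(\<lambda>w. ln (cmod (w - z))) \<in> borel_measurable \<nu>"
    unfolding borel_measurable_nu by measurable
  have "AE w in \<nu>. ennreal (norm (ln (cmod (w - z)))) \<le> log_kernel z w + ennreal k"
    using supp
  proof eventually_elim
    case (elim w)
    show ?case
    proof (cases "z = w \<or> ln (cmod (w - z)) < 0")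
      case True
      then show ?thesis by (auto simp: log_kernel_def norm_minus_commute)
    next
      case False
      have "cmod (w - z) \<le> r + cmod z" using elim norm_triangle_ineq4[of w z] by simp
      then have "ln (cmod (w - z)) \<le> k"
        unfolding k_def using False r0 by (subst ln_le_cancel_iff) auto
      then have "ennreal (norm (ln (cmod (w - z)))) \<le> ennreal k"
        using False by (intro ennreal_leI) simp
      then show ?thesis by (simp add: add_increasing)
    qed
  qed
  then have "(\<integral>\<^sup>+w. ennreal (norm (ln (cmod (w - z)))) \<partial>\<nu>) \<le> (\<integral>\<^sup>+w. log_kernel z w + ennreal k \<partial>\<nu>)"
    by (rule nn_integral_mono_AE)
  also have "\<dots> = log_potential \<nu> z + ennreal k"
    unfolding log_potential_def using borel_measurable_log_kernel[of z]
    unfolding borel_measurable_nu[symmetric]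
    by (subst nn_integral_add) (auto simp: emeasure_space_1)
  also have "\<dots> \<le> ennreal B + ennreal k" using pot_bounded by (rule add_right_mono)
  also have "\<dots> < \<infinity>" by (simp flip: ennreal_plus_if)
  finally show ?thesis by (intro integrableI_bounded mf)
qed

lemma integral_ln_dist_lower: "- B \<le> (\<integral>w. ln (cmod (w - z)) \<partial>\<nu>)"
proof -
  interpret prob_space \<nu> by (rule prob)
  define g where "g = (\<lambda>w. ln (cmod (w - z)))"
  have gi: "integrable \<nu> g" unfolding g_def by (rule integrable_ln_dist)
  have hi: "integrable \<nu> (\<lambda>w. max (- g w) 0)"
    using gi by (intro integrable_max integrable_minus) auto
  have "(\<integral>\<^sup>+w. ennreal (max (- g w) 0) \<partial>\<nu>) \<le> log_potential \<nu> z"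
    unfolding log_potential_def
  proof (rule nn_integral_mono)
    fix w show "ennreal (max (- g w) 0) \<le> log_kernel z w"
      by (cases "z = w") (auto simp: log_kernel_def g_def norm_minus_commute ennreal_max_0)
  qed
  also have "\<dots> \<le> ennreal B" by (rule pot_bounded)
  finally have "enn2real (\<integral>\<^sup>+w. ennreal (max (- g w) 0) \<partial>\<nu>) \<le> enn2real (ennreal B)"
    by (intro enn2real_mono) auto
  then have "enn2real (\<integral>\<^sup>+w. ennreal (max (- g w) 0) \<partial>\<nu>) \<le> B"
    using B0 by simp
  then have "(\<integral>w. max (- g w) 0 \<partial>\<nu>) \<le> B"
    using hi by (subst integral_eq_nn_integral) auto
  moreover have "(\<integral>w. - g w \<partial>\<nu>) \<le> (\<integral>w. max (- g w) 0 \<partial>\<nu>)"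
    using gi hi by (intro integral_mono) auto
  ultimately show ?thesis unfolding g_def by simp
qed

definition bw_const :: real where
  "bw_const = max (ln 4) (ln (R + (2 * r + R + 1)) + B)"

lemma bw_const_nonneg: "0 \<le> bw_const"
  unfolding bw_const_def by (auto intro: max.coboundedI1)

text \<open>For z far away all |w - z| are comparable to
  |z0 - z|; for z near the disc the mean is bounded below by -B.\<close>
lemma dist_le_exp_mean_ln_dist:
  assumes z0: "cmod z0 \<le> R"
  shows "cmod (z0 - z) \<le> exp ((\<integral>w. ln (cmod (w - z)) \<partial>\<nu>) + bw_const)"
proof (cases "z0 = z")
  case False
  interpret prob_space \<nu> by (rule prob)
  define I where "I = (\<integral>w. ln (cmod (w - z)) \<partial>\<nu>)"
  have d0: "0 < cmod (z0 - z)" using False by simp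
  have "ln (cmod (z0 - z)) \<le> I + bw_const"
  proof (cases "cmod z \<ge> 2 * r + R + 1")
    case True
    have "AE w in \<nu>. ln (cmod (z0 - z)) - ln 4 \<le> ln (cmod (w - z))"
      using supp
    proof eventually_elim
      case (elim w)
      have a: "cmod (z0 - z) \<le> 2 * cmod z"
        using norm_triangle_ineq4[of z0 z] z0 True r0 by simp
      have b: "cmod z - r \<le> cmod (w - z)"
        using norm_triangle_ineq2[of z w] elim by (simp add: norm_minus_commute)
      have "ln (cmod (z0 - z)) - ln 4 = ln (cmod (z0 - z) / 4)"
        using d0 by (simp add: ln_div)
      also have "\<dots> \<le> ln (cmod (w - z))"
        using a b True r0 R0 d0 by (subst ln_le_cancel_iff) auto
      finally show ?case .
    qed
    then have "(\<integral>w. ln (cmod (z0 - z)) - ln 4 \<partial>\<nu>) \<le> I"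
      unfolding I_def by (intro integral_mono_AE integrable_ln_dist) auto
    then show ?thesis unfolding bw_const_def by (simp add: prob_space)
  next
    case False
    have "cmod (z0 - z) \<le> R + (2 * r + R + 1)"
      using norm_triangle_ineq4[of z0 z] z0 False by simp
    then have "ln (cmod (z0 - z)) \<le> ln (R + (2 * r + R + 1))"
      using d0 R0 r0 by (subst ln_le_cancel_iff) auto
    moreover have "- B \<le> I" unfolding I_def by (rule integral_ln_dist_lower)
    ultimately show ?thesis unfolding bw_const_def by linarith
  qed
  then have "exp (ln (cmod (z0 - z))) \<le> exp (I + bw_const)" by (simp only: exp_le_cancel_iff)
  then show ?thesis using d0 unfolding I_def by (simp only: exp_ln)
qed simp

text \<open>Factoring p into linear factors (fundamental theorem of algebra) and multiplying the
  estimates: ln|p| is nu-integrable, p is nonzero nu-a.e., and on the disc of radius R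
  |p(z0)| <= exp(mean of ln|p| + bw_const * deg p).\<close>
lemma poly_le_exp_mean_ln_poly:
  assumes "p \<noteq> 0"
  shows "integrable \<nu> (\<lambda>w. ln (cmod (poly p w))) \<and> (AE w in \<nu>. poly p w \<noteq> 0) \<and>
    (\<forall>z0. cmod z0 \<le> R \<longrightarrow>
       cmod (poly p z0) \<le> exp ((\<integral>w. ln (cmod (poly p w)) \<partial>\<nu>) + bw_const * degree p))"
  using assms
proof (induction "degree p" arbitrary: p)
  case 0
  interpret prob_space \<nu> by (rule prob)
  from 0 obtain a where "p = [:a:]" "a \<noteq> 0" by (metis degree_eq_zeroE pCons_0_0)
  then show ?case by (simp add: prob_space)
next
  case (Suc n)
  interpret prob_space \<nu> by (rule prob)
  have "\<not> constant (poly p)" using Suc(2) by (simp add: constant_degree)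
  then obtain z where "poly p z = 0" using fundamental_theorem_of_algebra by blast
  then obtain q where pq: "p = [:-z, 1:] * q" by (metis dvdE poly_eq_0_iff_dvd)
  with Suc.prems have q0: "q \<noteq> 0" by auto
  have dq: "degree p = 1 + degree q" using q0 unfolding pq by (subst degree_mult_eq) auto
  with Suc(2) have "n = degree q" by simp
  from Suc(1)[OF this q0] have q_int: "integrable \<nu> (\<lambda>w. ln (cmod (poly q w)))"
    and q_nz: "AE w in \<nu>. poly q w \<noteq> 0"
    and q_bound: "\<And>z0. cmod z0 \<le> R \<Longrightarrow>
      cmod (poly q z0) \<le> exp ((\<integral>w. ln (cmod (poly q w)) \<partial>\<nu>) + bw_const * degree q)"
    by auto
  have p_eq: "\<And>w. poly p w = (w - z) * poly q w" unfolding pq by (simp add: algebra_simps)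
  have AE_ln: "AE w in \<nu>. ln (cmod (poly p w)) = ln (cmod (w - z)) + ln (cmod (poly q w))"
    using q_nz AE_neq[of z] by eventually_elim (simp add: p_eq norm_mult ln_mult)
  have p_nz: "AE w in \<nu>. poly p w \<noteq> 0"
    using q_nz AE_neq[of z] by eventually_elim (simp add: p_eq)
  have mp: "(\<lambda>w. ln (cmod (poly p w))) \<in> borel_measurable \<nu>"
    unfolding borel_measurable_nu by (rule borel_measurable_ln_poly)
  have ms: "(\<lambda>w. ln (cmod (w - z)) + ln (cmod (poly q w))) \<in> borel_measurable \<nu>"
    unfolding borel_measurable_nu using borel_measurable_ln_poly[of q] by measurable
  have p_int: "integrable \<nu> (\<lambda>w. ln (cmod (poly p w)))"
    using integrable_cong_AE[OF mp ms AE_ln] integrable_ln_dist[of z] q_int by auto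
  have mean_eq: "(\<integral>w. ln (cmod (poly p w)) \<partial>\<nu>) =
      (\<integral>w. ln (cmod (w - z)) \<partial>\<nu>) + (\<integral>w. ln (cmod (poly q w)) \<partial>\<nu>)"
    using integral_cong_AE[OF mp ms AE_ln] integrable_ln_dist[of z] q_int by simp
  have "cmod (poly p z0) \<le> exp ((\<integral>w. ln (cmod (poly p w)) \<partial>\<nu>) + bw_const * degree p)"
    if z0: "cmod z0 \<le> R" for z0
  proof -
    have "cmod (poly p z0) = cmod (z0 - z) * cmod (poly q z0)" by (simp add: p_eq norm_mult)
    also have "\<dots> \<le> exp ((\<integral>w. ln (cmod (w - z)) \<partial>\<nu>) + bw_const) *
        exp ((\<integral>w. ln (cmod (poly q w)) \<partial>\<nu>) + bw_const * degree q)"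
      by (intro mult_mono dist_le_exp_mean_ln_dist q_bound z0) auto
    also have "\<dots> = exp ((\<integral>w. ln (cmod (poly p w)) \<partial>\<nu>) + bw_const * degree p)"
      unfolding mean_eq dq by (simp add: exp_add[symmetric] algebra_simps)
    finally show ?thesis .
  qed
  with p_int p_nz show ?case by blast
qed

lemma Bernstein_Walsh_bound:
  assumes "degree p \<le> n" "0 < M" "AE w in \<nu>. cmod (poly p w) \<le> M" "cmod z0 \<le> R"
  shows "cmod (poly p z0) \<le> M * exp (bw_const * n)"
proof (cases "p = 0")
  case False
  interpret prob_space \<nu> by (rule prob)
  from poly_le_exp_mean_ln_poly[OF False] have p_int: "integrable \<nu> (\<lambda>w. ln (cmod (poly p w)))"
    and p_nz: "AE w in \<nu>. poly p w \<noteq> 0"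
    and p_bound: "cmod (poly p z0) \<le> exp ((\<integral>w. ln (cmod (poly p w)) \<partial>\<nu>) + bw_const * degree p)"
    using assms(4) by auto
  have "AE w in \<nu>. ln (cmod (poly p w)) \<le> ln M"
    using p_nz assms(3) by eventually_elim (simp add: assms(2))
  then have "(\<integral>w. ln (cmod (poly p w)) \<partial>\<nu>) \<le> (\<integral>w. ln M \<partial>\<nu>)"
    by (intro integral_mono_AE p_int) auto
  then have mean: "(\<integral>w. ln (cmod (poly p w)) \<partial>\<nu>) \<le> ln M" by (simp add: prob_space)
  have "bw_const * degree p \<le> bw_const * n"
    using assms(1) bw_const_nonneg by (intro mult_left_mono) auto
  with mean have "exp ((\<integral>w. ln (cmod (poly p w)) \<partial>\<nu>) + bw_const * degree p) \<le> exp (ln M + bw_const * n)"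
    by simp
  also have "\<dots> = M * exp (bw_const * n)" using assms(2) by (simp add: exp_add)
  finally show ?thesis using p_bound by simp
qed (use assms in simp)

end

section \<open>From finite energy to bounded potential\<close>

text \<open>If w0 is a point of A nearest to z, then |w0 - w| <= 2 |z - w| for every w in A, so
  the kernel at z is dominated on A by ln 2 plus the kernel at w0.\<close>
lemma log_kernel_le_nearest_point:
  assumes "w \<in> A" "z \<notin> A" "w0 \<in> A" "\<And>y. y \<in> A \<Longrightarrow> dist z w0 \<le> dist z y"
  shows "log_kernel z w \<le> ennreal (ln 2) + log_kernel w0 w"
proof (cases "w0 = w")
  case False
  have zw: "z \<noteq> w" using assms by auto
  have "cmod (w0 - w) \<le> cmod (w0 - z) + cmod (z - w)"
    using norm_triangle_ineq[of "w0 - z" "z - w"] by simp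
  also have "cmod (w0 - z) \<le> cmod (z - w)"
    using assms(4)[OF assms(1)] by (simp add: dist_norm norm_minus_commute)
  finally have d: "cmod (w0 - w) \<le> 2 * cmod (z - w)" by simp
  have pos: "0 < cmod (w0 - w)" "0 < cmod (z - w)" using False zw by auto
  have "ln (cmod (w0 - w)) \<le> ln (2 * cmod (z - w))"
    using d pos by (subst ln_le_cancel_iff) auto
  also have "\<dots> = ln 2 + ln (cmod (z - w))" using pos by (simp add: ln_mult)
  finally have "ennreal (- ln (cmod (z - w))) \<le> ennreal (ln 2 + - ln (cmod (w0 - w)))"
    by (intro ennreal_leI) simp
  also have "\<dots> \<le> ennreal (ln 2) + ennreal (- ln (cmod (w0 - w)))"
    by (auto simp: ennreal_plus_if intro!: ennreal_leI)
  finally show ?thesis using zw False by (simp add: log_kernel_def)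
qed (simp add: log_kernel_def)

text \<open>A weak maximum principle: if the potential of mu is at most N on a compact set A, then
  the potential of the restriction of mu to A is at most ln 2 + N everywhere.\<close>
lemma restricted_potential_bounded:
  assumes prob: "prob_space \<mu>" and sets_mu: "sets \<mu> = sets borel"
    and A: "compact A" "A \<noteq> {}" and pot: "\<And>w. w \<in> A \<Longrightarrow> log_potential \<mu> w \<le> of_nat N"
  shows "(\<integral>\<^sup>+w. indicator A w * log_kernel z w \<partial>\<mu>) \<le> ennreal (ln 2 + real N)"
proof (cases "z \<in> A")
  case True
  have "(\<integral>\<^sup>+w. indicator A w * log_kernel z w \<partial>\<mu>) \<le> log_potential \<mu> z"
    unfolding log_potential_def by (rule nn_integral_mono) (auto simp: indicator_def)
  also have "\<dots> \<le> of_nat N" using True by (rule pot)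
  also have "\<dots> \<le> ennreal (ln 2 + real N)" by (simp add: ennreal_of_nat_eq_real_of_nat)
  finally show ?thesis .
next
  case False
  interpret prob_space \<mu> by (rule prob)
  obtain w0 where w0: "w0 \<in> A" "\<And>y. y \<in> A \<Longrightarrow> dist z w0 \<le> dist z y"
    using distance_attains_inf[OF compact_imp_closed[OF A(1)] A(2)] by blast
  have "(\<integral>\<^sup>+w. indicator A w * log_kernel z w \<partial>\<mu>) \<le> (\<integral>\<^sup>+w. ennreal (ln 2) + log_kernel w0 w \<partial>\<mu>)"
    by (rule nn_integral_mono)
      (auto simp: indicator_def intro: log_kernel_le_nearest_point[OF _ False w0])
  also have "\<dots> = ennreal (ln 2) + log_potential \<mu> w0"
    unfolding log_potential_def using borel_measurable_log_kernel[of w0]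
    by (subst nn_integral_add) (auto simp: emeasure_space_1 measurable_cong_sets[OF sets_mu refl])
  also have "\<dots> \<le> ennreal (ln 2) + of_nat N" using pot[OF w0(1)] by (rule add_left_mono)
  also have "\<dots> = ennreal (ln 2 + real N)" by (simp add: ennreal_of_nat_eq_real_of_nat ennreal_plus)
  finally show ?thesis .
qed

text \<open>If mu has finite energy and is carried by a compact K covered by countably many Borel
  sets E C, then some E C contains a compact piece of K of positive mu-measure on which the
  potential of mu is bounded: the sets K, E C, {potential <= N} exhaust mu-almost everything.\<close>
lemma finite_energy_compact_piece:
  fixes \<mu> :: "complex measure" and E :: "nat \<Rightarrow> complex set"
  assumes prob: "prob_space \<mu>" and sets_mu: "sets \<mu> = sets borel"
    and K: "compact K" "emeasure \<mu> K = 1" and KE: "K \<subseteq> (\<Union>C. E C)"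
    and E: "\<And>C. E C \<in> sets borel"
    and energy: "(\<integral>\<^sup>+z. log_potential \<mu> z \<partial>\<mu>) \<noteq> \<infinity>"
  obtains A C N where "compact A" "A \<subseteq> K \<inter> E C" "\<And>w. w \<in> A \<Longrightarrow> log_potential \<mu> w \<le> of_nat N"
    "0 < emeasure \<mu> A"
proof -
  interpret prob_space \<mu> by (rule prob)
  have sp: "space \<mu> = UNIV" using sets_eq_imp_space_eq[OF sets_mu] by simp
  have "(\<lambda>(z, w). log_kernel z w) \<in> borel_measurable (\<mu> \<Otimes>\<^sub>M \<mu>)"
    using borel_measurable_log_kernel_pair
    unfolding case_prod_beta' measurable_cong_sets[OF sets_pair_measure_cong[OF sets_mu sets_mu] refl] .
  then have pot_meas: "log_potential \<mu> \<in> borel_measurable \<mu>"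
    unfolding log_potential_def[abs_def] by (rule borel_measurable_nn_integral)
  have AE_finite: "AE z in \<mu>. log_potential \<mu> z \<noteq> \<infinity>"
    using pot_meas energy by (intro nn_integral_PInf_AE) auto
  have K_sets: "K \<in> sets \<mu>" using K(1) sets_mu by (simp add: compact_imp_closed)
  have AE_K: "AE z in \<mu>. z \<in> K"
    using K(2) K_sets by (subst AE_in_set_eq_1) (auto simp: emeasure_eq_measure)
  define S where "S C N = K \<inter> E C \<inter> {z. log_potential \<mu> z \<le> of_nat N}" for C N :: nat
  have S_sets: "S C N \<in> sets \<mu>" for C N
  proof -
    have "{z \<in> space \<mu>. log_potential \<mu> z \<le> of_nat N} \<in> sets \<mu>" using pot_meas by measurable
    then show ?thesis unfolding S_def using K_sets E[of C] sets_mu sp by (auto intro!: sets.Int)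
  qed
  have "\<exists>C N. emeasure \<mu> (S C N) \<noteq> 0"
  proof (rule ccontr)
    assume "\<not> ?thesis"
    then have "AE z in \<mu>. z \<notin> S C N" for C N
      using S_sets[of C N] by (intro AE_I'[of "S C N"]) (auto intro: null_setsI)
    then have "AE z in \<mu>. \<forall>C N. z \<notin> S C N" by (simp add: AE_all_countable)
    then have "AE z in \<mu>. False"
      using AE_K AE_finite
    proof eventually_elim
      case (elim z)
      from elim KE obtain C where "z \<in> E C" by blast
      obtain N where "log_potential \<mu> z < of_nat N"
        using elim(3) ennreal_Ex_less_of_nat by (auto simp: less_top[symmetric])
      then have "z \<in> S C N" using elim \<open>z \<in> E C\<close> unfolding S_def by auto
      with elim show False by blast
    qed
    then show False by simp
  qed
  then obtain C N where "emeasure \<mu> (S C N) \<noteq> 0" by blast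
  moreover have "emeasure \<mu> (S C N) = (SUP A \<in> {A. A \<subseteq> S C N \<and> compact A}. emeasure \<mu> A)"
    using S_sets[of C N] sets_mu by (intro inner_regular) auto
  ultimately have "0 < (SUP A \<in> {A. A \<subseteq> S C N \<and> compact A}. emeasure \<mu> A)"
    by (simp add: zero_less_iff_neq_zero)
  then obtain A where "A \<subseteq> S C N" "compact A" "0 < emeasure \<mu> A"
    by (auto simp: less_SUP_iff)
  then show thesis by (intro that[of A C N]) (auto simp: S_def)
qed

text \<open>Normalising mu on such a piece gives a probability measure nu carried by K \<inter> E C whose
  potential is bounded everywhere.\<close>
lemma bounded_potential_measure:
  fixes \<mu> :: "complex measure" and E :: "nat \<Rightarrow> complex set"
  assumes prob: "prob_space \<mu>" and sets_mu: "sets \<mu> = sets borel"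
    and K: "compact K" "emeasure \<mu> K = 1" and KE: "K \<subseteq> (\<Union>C. E C)"
    and E: "\<And>C. E C \<in> sets borel"
    and energy: "(\<integral>\<^sup>+z. log_potential \<mu> z \<partial>\<mu>) \<noteq> \<infinity>"
  obtains C \<nu> B where "prob_space \<nu>" "sets \<nu> = sets borel" "AE w in \<nu>. w \<in> K \<inter> E C" "0 \<le> B"
    "\<And>z. log_potential \<nu> z \<le> ennreal B"
proof -
  interpret prob_space \<mu> by (rule prob)
  obtain A C N where A: "compact A" "A \<subseteq> K \<inter> E C"
      and pot: "\<And>w. w \<in> A \<Longrightarrow> log_potential \<mu> w \<le> of_nat N" and pos: "0 < emeasure \<mu> A"
    using finite_energy_compact_piece[OF assms] by metis
  have A_sets: "A \<in> sets \<mu>" using A(1) sets_mu by (simp add: compact_imp_closed)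
  have A_ne: "A \<noteq> {}" using pos by auto
  define m where "m = measure \<mu> A"
  have m0: "0 < m" using pos unfolding m_def by (simp add: emeasure_eq_measure)
  define g where "g w = ennreal (1 / m) * indicator A w" for w
  have g_meas: "g \<in> borel_measurable \<mu>" unfolding g_def using A_sets by measurable
  define \<nu> where "\<nu> = density \<mu> g"
  have sets_nu: "sets \<nu> = sets borel" unfolding \<nu>_def using sets_mu by simp
  have sp: "space \<mu> = UNIV" using sets_eq_imp_space_eq[OF sets_mu] by simp
  have "emeasure \<nu> (space \<nu>) = (\<integral>\<^sup>+w. g w \<partial>\<mu>)"
    unfolding \<nu>_def using g_meas by (subst emeasure_density) (auto simp: sp[symmetric])
  also have "\<dots> = ennreal (1 / m) * emeasure \<mu> A"
    unfolding g_def using A_sets by (simp add: nn_integral_cmult_indicator)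
  also have "\<dots> = 1" using m0 unfolding m_def
    by (simp add: emeasure_eq_measure ennreal_mult[symmetric])
  finally have prob_nu: "prob_space \<nu>" by (intro prob_spaceI)
  have AE_nu: "AE w in \<nu>. w \<in> K \<inter> E C"
    unfolding \<nu>_def using g_meas A(2) by (subst AE_density) (auto simp: g_def indicator_def)
  define B where "B = (ln 2 + real N) / m"
  have B0: "0 \<le> B" unfolding B_def using m0 by simp
  have "log_potential \<nu> z \<le> ennreal B" for z
  proof -
    have kernel_meas: "log_kernel z \<in> borel_measurable \<mu>"
      unfolding measurable_cong_sets[OF sets_mu refl] by (rule borel_measurable_log_kernel)
    have "log_potential \<nu> z = (\<integral>\<^sup>+w. g w * log_kernel z w \<partial>\<mu>)"
      unfolding log_potential_def \<nu>_def using g_meas kernel_meas by (rule nn_integral_density)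
    also have "\<dots> = ennreal (1 / m) * (\<integral>\<^sup>+w. indicator A w * log_kernel z w \<partial>\<mu>)"
      unfolding g_def using A_sets kernel_meas
      by (subst nn_integral_cmult[symmetric]) (auto simp: mult.assoc)
    also have "\<dots> \<le> ennreal (1 / m) * ennreal (ln 2 + real N)"
      using restricted_potential_bounded[OF prob sets_mu A(1) A_ne pot] by (intro mult_left_mono) auto
    also have "\<dots> = ennreal ((ln 2 + real N) / m)"
      using m0 by (subst ennreal_mult[symmetric]) auto
    finally show ?thesis unfolding B_def .
  qed
  with prob_nu sets_nu AE_nu B0 show thesis by (rule that)
qed

text \<open>If the coefficient bounds with constant C hold nu-almost everywhere, Bernstein-Walsh
  applied to each coefficient (a polynomial of degree at most m) gives geometric bounds with
  constant (C + 1) e^c at every point z0.\<close>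
lemma tx_convergent_everywhere:
  fixes F :: "complex \<Rightarrow> ('n::finite) tx_series"
  assumes F: "poly_coeff_family F"
    and prob: "prob_space \<nu>" and sets_nu: "sets \<nu> = sets borel" and supp: "AE w in \<nu>. cmod w \<le> r"
    and pot: "\<And>z. log_potential \<nu> z \<le> ennreal B" and B0: "0 \<le> B" and r0: "0 \<le> r"
    and bounded: "AE w in \<nu>. tx_bounded (F w) (real C)"
  shows "tx_convergent (F z0)"
proof -
  obtain c where c0: "0 \<le> c" and bw: "\<And>p n M. degree p \<le> n \<Longrightarrow> 0 < M \<Longrightarrow>
      (AE w in \<nu>. cmod (poly p w) \<le> M) \<Longrightarrow> cmod (poly p z0) \<le> M * exp (c * n)"
    using Bernstein_Walsh_bound[OF prob sets_nu supp pot B0 r0 norm_ge_zero[of z0]]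
      bw_const_nonneg[OF prob sets_nu supp pot B0 r0 norm_ge_zero[of z0]] by blast
  have "cmod (F z0 m \<alpha>) \<le> (real (Suc C) * exp c) ^ (m + mi_size \<alpha>)"
    if nonzero: "(m, \<alpha>) \<noteq> (0, (\<lambda>_. 0))" for m \<alpha>
  proof -
    obtain p where deg: "degree p \<le> m" and p: "(\<lambda>s. F s m \<alpha>) = poly p"
      using F unfolding poly_coeff_family_def poly_fun_le_def by blast
    have F_eq: "\<And>s. F s m \<alpha> = poly p s" using p by (simp add: fun_eq_iff)
    define M where "M = real (Suc C) ^ (m + mi_size \<alpha>)"
    have M0: "0 < M" unfolding M_def by simp
    have "AE w in \<nu>. cmod (poly p w) \<le> M"
      using bounded
    proof eventually_elim
      case (elim w)
      then have "cmod (F w m \<alpha>) \<le> real C ^ (m + mi_size \<alpha>)"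
        using nonzero unfolding tx_bounded_def by blast
      also have "\<dots> \<le> M" unfolding M_def by (intro power_mono) auto
      finally show ?case by (simp add: F_eq)
    qed
    then have "cmod (F z0 m \<alpha>) \<le> M * exp (c * m)" using bw[OF deg M0] by (simp add: F_eq)
    also have "\<dots> = M * exp c ^ m" by (simp add: exp_of_nat_mult[symmetric] mult.commute)
    also have "\<dots> \<le> M * exp c ^ (m + mi_size \<alpha>)"
      using c0 M0 by (intro mult_left_mono power_increasing) auto
    also have "\<dots> = (real (Suc C) * exp c) ^ (m + mi_size \<alpha>)"
      unfolding M_def by (simp add: power_mult_distrib)
    finally show ?thesis .
  qed
  then show ?thesis unfolding tx_convergent_def by blast
qed


theorem mainTheorem3:
  fixes b :: "nat \<Rightarrow> ('n::finite \<Rightarrow> nat) \<Rightarrow> complex"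
    and f :: "nat \<Rightarrow> nat \<Rightarrow> ('n \<Rightarrow> nat) \<Rightarrow> complex"
  assumes "\<And>j. j \<ge> 1 \<Longrightarrow> x_convergent (b j)"
    and "tx_convergent (phi_series b)"
    and "b 1 (\<lambda>_. 0) = 1"
  shows "(\<forall>r\<ge>0. log_capacity (Conv_phi b f \<inter> cball 0 r) = 0) \<or> Conv_phi b f = UNIV"
proof (cases "\<forall>r\<ge>0. log_capacity (Conv_phi b f \<inter> cball 0 r) = 0")
  case False
  then obtain r where r0: "0 \<le> r" and cap: "log_capacity (Conv_phi b f \<inter> cball 0 r) \<noteq> 0"
    by blast
  define F where "F s = subst_y f (phi_s b s)" for s
  have F: "poly_coeff_family F" unfolding F_def by (rule poly_coeff_family_subst_phi_s)
  define E where "E C = {s. tx_bounded (F s) (real C)}" for C :: nat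
  obtain \<mu> K where \<mu>: "sets \<mu> = sets borel" "prob_space \<mu>" and K: "compact K"
      "K \<subseteq> Conv_phi b f \<inter> cball 0 r" "emeasure \<mu> K = 1"
      and energy: "(\<integral>\<^sup>+z. log_potential \<mu> z \<partial>\<mu>) \<noteq> \<infinity>"
    using log_capacity_nonzero_imp_finite_energy[OF cap] by blast
  have "K \<subseteq> (\<Union>C. E C)"
    using K(2) unfolding Conv_phi_def E_def F_def tx_convergent_iff_nat_bound by blast
  moreover have "E C \<in> sets borel" for C
    unfolding E_def using closed_tx_bounded[OF F] by (rule borel_closed)
  ultimately obtain C \<nu> B where \<nu>: "prob_space \<nu>" "sets \<nu> = sets borel" "0 \<le> B"
      "\<And>z. log_potential \<nu> z \<le> ennreal B" and carried: "AE w in \<nu>. w \<in> K \<inter> E C"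
    using bounded_potential_measure[OF \<mu>(2,1) K(1,3) _ _ energy] by metis
  have supp: "AE w in \<nu>. cmod w \<le> r"
    using carried by eventually_elim (use K(2) in auto)
  have "AE w in \<nu>. tx_bounded (F w) (real C)"
    using carried by eventually_elim (simp add: E_def)
  then have "tx_convergent (F z0)" for z0
    by (rule tx_convergent_everywhere[OF F \<nu>(1,2) supp \<nu>(4,3) r0])
  then show ?thesis unfolding Conv_phi_def F_def by blast
qed simp

end
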